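(* Let $H=\sum_{i=1}^Nc_iP_i$ be a Pauli Hamiltonian, $|\psi\rangle$ a state, $\mathcal{R}=(G^{[1]},\dots,G^{[m]})$ a repacked grouping (of some grouping of $H$), and $\mathcal{R}'=(G'^{[1]},\dots,G'^{[m]})$ a refinement of $\mathcal{R}$ such that for some $1\le\ell\le m$: $G'^{[j]}=G^{[j]}$ for all $j\ne\ell$, and $G'^{[\ell]}\setminus G^{[\ell]}=\{P_s\}$ for some $P_s\in\mathrm{supp}(H)$. Fix positive integer shot counts $M_1,\dots,M_m$ used for both $\mathcal{R}$ and $\mathcal{R}'$. Define, for $t,t'\in\{1,\dots,N\}$, $\alpha_t=\sum_{j\in\Gamma_{\mathcal{R}}(t)}M_j$ and $\alpha_{t,t'}=\sum_{j\in\Gamma_{\mathcal{R}}(t)\cap\Gamma_{\mathcal{R}}(t')}M_j$, and $\mathcal{Q}_\ell=\{i:P_i\in G^{[\ell]}\}$, $\mathcal{Q}_\ell^\complement=\{1,\dots,N\}\setminus\mathcal{Q}_\ell$. Then, for the shot-weighted averaging estimators, $\mathrm{Var}(\overline{E}_{\mathcal{R}'})\le\mathrm{Var}(\overline{E}_{\mathcal{R}})$ if and only if $$\tfrac12c_s^2\sigma^2_{P_s}\ \ge\ \sum_{i\in\mathcal{Q}_\ell}c_ic_s\sigma_{P_iP_s}\frac{\alpha_s-\alpha_{i,s}}{\alpha_i}\ -\sum_{i\in\mathcal{Q}_\ell^\complement,\,i\ne s}c_ic_s\sigma_{P_iP_s}\frac{\alpha_{i,s}}{\alpha_i},$$ and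 $\mathrm{Var}(\overline{E}_{\mathcal{R}'})<\mathrm{Var}(\overline{E}_{\mathcal{R}})$ if and only if this inequality is strict.
   Context: A Pauli Hamiltonian is $H=\sum_{i=1}^Nc_iP_i$ with real nonzero $c_i$ and distinct $n$-qubit Pauli strings; $\mathrm{supp}(H)=\{P_1,\dots,P_N\}$. $\sigma_P^2=1-\langle P\rangle^2$, and for commuting $P,Q$, $\sigma_{PQ}=\langle PQ\rangle-\langle P\rangle\langle Q\rangle$ (terms with $\alpha_{i,s}=0$, possibly involving non-commuting pairs, are taken to be $0$). A repacked grouping is a list of $m$ sets of mutually commuting operators of $\mathrm{supp}(H)$ covering $\mathrm{supp}(H)$, possibly overlapping, each containing the corresponding group of an underlying disjoint grouping; $(G'^{[j]})$ is a refinement of $(G^{[j]})$ if $G^{[j]}\subseteq G'^{[j]}$ for all $j$ (and it is again such a list). $\Gamma_{\mathcal{S}}(i)=\{j:P_i\in\text{group }j\text{ of }\mathcal{S}\}$. Measurement model: group $j$ is measured in $M_j$ independent shots with simultaneous $\pm1$ outcomes of all its operators; different groups are independent. The shot-weighted estimator is $\overline{E}_{\mathcal{S}}=\sum_ic_i\sum_{j\in\Gamma_{\mathcal{S}}(i)}\frac{M_j}{\sum_{k\in\Gamma_{\mathcal{S}}(i)}M_k}\overline{\langle P_i\rangle}_{(j)}$, whose variance is $\sum_i\frac{c_i^2\sigma_{P_i}^2}{\sum_{j\in\Gamma_{\mathcal{S}}(i)}M_j}+2\sum_{i<k}\frac{c_ic_k\sigma_{P_iP_k}\sum_{j\in\Gamma_{\mathcal{S}}(i)\cap\Gamma_{\mathcal{S}}(k)}M_j}{(\sum_{j\in\Gamma_{\mathcal{S}}(i)}M_j)(\sum_{j\in\Gamma_{\mathcal{S}}(k)}M_j)}$.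 *)

theory Defs
  imports "Jordan_Normal_Form.Matrix"
begin

datatype pauli = PI | PX | PY | PZ

fun pauli_entry :: "pauli \<Rightarrow> nat \<Rightarrow> nat \<Rightarrow> complex" where
  "pauli_entry PI a b = (if a = b then 1 else 0)"
| "pauli_entry PX a b = (if a \<noteq> b then 1 else 0)"
| "pauli_entry PY a b = (if a = b then 0 else if a = 0 then - \<i> else \<i>)"
| "pauli_entry PZ a b = (if a \<noteq> b then 0 else if a = 0 then 1 else -1)"

text \<open>The 2^n x 2^n matrix of a Pauli string (tensor product of its factors);
  the k-th factor acts on bit k of the basis index.\<close>
definition pstring_mat :: "pauli list \<Rightarrow> complex mat" where
  "pstring_mat ps = mat (2 ^ length ps) (2 ^ length ps)
     (\<lambda>(i, j). \<Prod>k<length ps. pauli_entry (ps ! k) ((i div 2 ^ k) mod 2) ((j div 2 ^ k) mod 2))"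

definition commutes :: "pauli list \<Rightarrow> pauli list \<Rightarrow> bool" where
  "commutes P Q \<longleftrightarrow> pstring_mat P * pstring_mat Q = pstring_mat Q * pstring_mat P"

definition is_state :: "nat \<Rightarrow> complex vec \<Rightarrow> bool" where
  "is_state n \<psi> \<longleftrightarrow> dim_vec \<psi> = 2 ^ n \<and> (\<Sum>k<2 ^ n. cmod (\<psi> $ k) ^ 2) = 1"

definition expect_mat :: "complex vec \<Rightarrow> complex mat \<Rightarrow> real" where
  "expect_mat \<psi> A = Re (\<Sum>k<dim_vec \<psi>. cnj (\<psi> $ k) * (A *\<^sub>v \<psi>) $ k)"

definition expect :: "complex vec \<Rightarrow> pauli list \<Rightarrow> real" where
  "expect \<psi> P = expect_mat \<psi> (pstring_mat P)"

definition sigma2 :: "complex vec \<Rightarrow> pauli list \<Rightarrow> real" where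
  "sigma2 \<psi> P = 1 - (expect \<psi> P) ^ 2"

text \<open>Covariance sigma_{PQ}; for non-commuting pairs the convention 0 is used
  (such terms only ever occur with weight alpha = 0).\<close>
definition sigma_cov :: "complex vec \<Rightarrow> pauli list \<Rightarrow> pauli list \<Rightarrow> real" where
  "sigma_cov \<psi> P Q = (if commutes P Q
      then expect_mat \<psi> (pstring_mat P * pstring_mat Q) - expect \<psi> P * expect \<psi> Q
      else 0)"

definition pauli_hamiltonian :: "nat \<Rightarrow> nat \<Rightarrow> (nat \<Rightarrow> real) \<Rightarrow> (nat \<Rightarrow> pauli list) \<Rightarrow> bool" where
  "pauli_hamiltonian n N c P \<longleftrightarrow>
     (\<forall>i\<in>{1..N}. c i \<noteq> 0 \<and> length (P i) = n) \<and> inj_on P {1..N}"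

definition supp :: "nat \<Rightarrow> (nat \<Rightarrow> pauli list) \<Rightarrow> pauli list set" where
  "supp N P = P ` {1..N}"

definition commuting_set :: "pauli list set \<Rightarrow> bool" where
  "commuting_set S \<longleftrightarrow> (\<forall>A\<in>S. \<forall>B\<in>S. commutes A B)"

definition is_grouping :: "nat \<Rightarrow> (nat \<Rightarrow> pauli list) \<Rightarrow> nat \<Rightarrow> (nat \<Rightarrow> pauli list set) \<Rightarrow> bool" where
  "is_grouping N P m D \<longleftrightarrow>
     (\<forall>j\<in>{1..m}. D j \<noteq> {} \<and> D j \<subseteq> supp N P \<and> commuting_set (D j)) \<and>
     (\<Union>j\<in>{1..m}. D j) = supp N P \<and>
     (\<forall>j\<in>{1..m}. \<forall>k\<in>{1..m}. j \<noteq> k \<longrightarrow> D j \<inter> D k = {})"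

definition is_repacked :: "nat \<Rightarrow> (nat \<Rightarrow> pauli list) \<Rightarrow> nat \<Rightarrow> (nat \<Rightarrow> pauli list set)
    \<Rightarrow> (nat \<Rightarrow> pauli list set) \<Rightarrow> bool" where
  "is_repacked N P m D G \<longleftrightarrow>
     is_grouping N P m D \<and>
     (\<forall>j\<in>{1..m}. D j \<subseteq> G j \<and> G j \<subseteq> supp N P \<and> commuting_set (G j)) \<and>
     (\<Union>j\<in>{1..m}. G j) = supp N P"

definition Gamma :: "nat \<Rightarrow> (nat \<Rightarrow> pauli list set) \<Rightarrow> (nat \<Rightarrow> pauli list) \<Rightarrow> nat \<Rightarrow> nat set" where
  "Gamma m G P i = {j \<in> {1..m}. P i \<in> G j}"

definition alpha :: "nat \<Rightarrow> (nat \<Rightarrow> pauli list set) \<Rightarrow> (nat \<Rightarrow> pauli list) \<Rightarrow> (nat \<Rightarrow> nat) \<Rightarrow> nat \<Rightarrow> real" where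
  "alpha m G P M i = (\<Sum>j\<in>Gamma m G P i. real (M j))"

definition alpha2 :: "nat \<Rightarrow> (nat \<Rightarrow> pauli list set) \<Rightarrow> (nat \<Rightarrow> pauli list) \<Rightarrow> (nat \<Rightarrow> nat) \<Rightarrow> nat \<Rightarrow> nat \<Rightarrow> real" where
  "alpha2 m G P M i k = (\<Sum>j\<in>Gamma m G P i \<inter> Gamma m G P k. real (M j))"

text \<open>Variance of the shot-weighted estimator E_S (formula from the measurement model).\<close>
definition est_var :: "nat \<Rightarrow> (nat \<Rightarrow> real) \<Rightarrow> (nat \<Rightarrow> pauli list) \<Rightarrow> complex vec
    \<Rightarrow> nat \<Rightarrow> (nat \<Rightarrow> pauli list set) \<Rightarrow> (nat \<Rightarrow> nat) \<Rightarrow> real" where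
  "est_var N c P \<psi> m G M =
     (\<Sum>i\<in>{1..N}. (c i) ^ 2 * sigma2 \<psi> (P i) / alpha m G P M i)
     + 2 * (\<Sum>i\<in>{1..N}. \<Sum>k\<in>{i<..N}.
          c i * c k * sigma_cov \<psi> (P i) (P k) * alpha2 m G P M i k
          / (alpha m G P M i * alpha m G P M k))"

end

theory Submission
  imports Defs
begin

text \<open>Adding \<open>P\<^sub>s\<close> to group \<open>\<ell>\<close> raises \<open>\<alpha>\<^sub>s\<close> by \<open>M\<^sub>\<ell>\<close>, raises \<open>\<alpha>\<^sub>i\<^sub>,\<^sub>s\<close> by \<open>M\<^sub>\<ell>\<close> exactly
  for \<open>i \<in> Q\<^sub>\<ell>\<close>, and leaves every other shot count unchanged. Hence only the diagonal term of
  \<open>s\<close> and the covariance terms of the pairs \<open>{i, s}\<close> change, and a common denominator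
  shows that each change is \<open>M\<^sub>\<ell> / (\<alpha>\<^sub>s \<alpha>'\<^sub>s)\<close> times an expression in the old counts only.
  Altogether \<open>Var(E') - Var(E) = M\<^sub>\<ell> / (\<alpha>\<^sub>s \<alpha>'\<^sub>s) \<cdot> (2 rhs - c\<^sub>s\<^sup>2 \<sigma>\<^sub>P\<^sub>s\<^sup>2)\<close>, whose sign
  is that of the second factor.\<close>

lemma sum_upper_pairs_through:
  fixes d :: "nat \<Rightarrow> nat \<Rightarrow> 'a::comm_monoid_add"
  assumes s: "s \<in> {1..N}"
    and away: "\<And>i k. i \<in> {1..N} \<Longrightarrow> k \<in> {1..N} \<Longrightarrow> i \<noteq> s \<Longrightarrow> k \<noteq> s \<Longrightarrow> d i k = 0"
    and left: "\<And>i. i \<in> {1..N} \<Longrightarrow> i \<noteq> s \<Longrightarrow> d i s = h i"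
    and right: "\<And>i. i \<in> {1..N} \<Longrightarrow> i \<noteq> s \<Longrightarrow> d s i = h i"
  shows "(\<Sum>i\<in>{1..N}. \<Sum>k\<in>{i<..N}. d i k) = (\<Sum>i\<in>{1..N}-{s}. h i)"
proof -
  have row: "(\<Sum>k\<in>{i<..N}. d i k) = (if i < s then h i else 0)" if i: "i \<in> {1..N}-{s}" for i
  proof -
    have "(\<Sum>k\<in>{i<..N}. d i k) = (\<Sum>k\<in>{i<..N}. if k = s then h i else 0)"
      by (rule sum.cong) (use i away left in auto)
    then show ?thesis using s by auto
  qed
  have row_s: "(\<Sum>k\<in>{s<..N}. d s k) = (\<Sum>i\<in>{1..N}-{s}. if i < s then 0 else h i)"
  proof -
    have "{i\<in>{1..N}-{s}. \<not> i < s} = {s<..N}" using s by auto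
    then show ?thesis using right s by (simp add: sum.If_cases Int_def)
  qed
  have "(\<Sum>i\<in>{1..N}. \<Sum>k\<in>{i<..N}. d i k)
      = (\<Sum>k\<in>{s<..N}. d s k) + (\<Sum>i\<in>{1..N}-{s}. \<Sum>k\<in>{i<..N}. d i k)"
    using s by (simp add: sum.remove)
  also have "\<dots> = (\<Sum>i\<in>{1..N}-{s}. (if i < s then 0 else h i) + (if i < s then h i else 0))"
    by (simp add: row row_s sum.distrib)
  also have "\<dots> = (\<Sum>i\<in>{1..N}-{s}. h i)"
    by (rule sum.cong) auto
  finally show ?thesis .
qed

lemma sum_of_bool_split:
  fixes f b x :: "'i \<Rightarrow> real"
  assumes "finite A" "B \<subseteq> A"
  shows "(\<Sum>i\<in>A. f i * (of_bool (i \<in> B) * a - b i) / x i)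
       = (\<Sum>i\<in>B. f i * (a - b i) / x i) - (\<Sum>i\<in>A - B. f i * b i / x i)"
proof -
  have "(\<Sum>i\<in>A. f i * (of_bool (i \<in> B) * a - b i) / x i)
      = (\<Sum>i\<in>A. if i \<in> B then f i * (a - b i) / x i else - (f i * b i / x i))"
    by (rule sum.cong) auto
  also have "\<dots> = (\<Sum>i\<in>B. f i * (a - b i) / x i) - (\<Sum>i\<in>A - B. f i * b i / x i)"
    using assms by (simp add: sum.If_cases sum_negf Int_absorb1 Diff_eq)
  finally show ?thesis .
qed

lemma shifted_ratio_diff:
  fixes x A d b t :: real
  assumes "x \<noteq> 0" "A \<noteq> 0" "A + d \<noteq> 0"
  shows "(b + t * d) / (x * (A + d)) - b / (x * A) = d / (A * (A + d)) * ((t * A - b) / x)"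
proof -
  have "(b + t * d) / (x * (A + d)) - b / (x * A) = (A * (b + t * d) - b * (A + d)) / (x * A * (A + d))"
    using assms by (simp add: divide_simps)
  also have "\<dots> = d / (A * (A + d)) * ((t * A - b) / x)"
    by (simp add: algebra_simps)
  finally show ?thesis .
qed

lemma diff_eq_pos_mult_sign_iff:
  fixes a b K y :: real
  assumes "0 < K" "a - b = K * y"
  shows "a \<le> b \<longleftrightarrow> y \<le> 0" and "a < b \<longleftrightarrow> y < 0"
proof -
  have "a \<le> b \<longleftrightarrow> K * y \<le> 0" "a < b \<longleftrightarrow> K * y < 0"
    using assms(2) by linarith+
  then show "a \<le> b \<longleftrightarrow> y \<le> 0" "a < b \<longleftrightarrow> y < 0"
    using assms(1) by (simp_all add: mult_le_0_iff mult_less_0_iff)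
qed

lemma sigma_cov_commute: "sigma_cov \<psi> A B = sigma_cov \<psi> B A"
  unfolding sigma_cov_def commutes_def by (auto simp: mult.commute)

lemma alpha2_commute: "alpha2 m G P M i k = alpha2 m G P M k i"
  unfolding alpha2_def by (simp add: Int_commute)

lemma alpha_pos:
  assumes "is_repacked N P m D G" "\<forall>j\<in>{1..m}. M j > 0" "i \<in> {1..N}"
  shows "alpha m G P M i > 0"
proof -
  have "P i \<in> (\<Union>j\<in>{1..m}. G j)"
    using assms(1,3) unfolding is_repacked_def supp_def by auto
  then obtain j where j: "j \<in> Gamma m G P i"
    unfolding Gamma_def by auto
  have "0 < real (M j)" using j assms(2) unfolding Gamma_def by auto
  also have "\<dots> \<le> alpha m G P M i"
    unfolding alpha_def by (rule member_le_sum) (use j in \<open>auto simp: Gamma_def\<close>)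
  finally show ?thesis .
qed

definition adds_to_group ::
    "nat \<Rightarrow> (nat \<Rightarrow> pauli list set) \<Rightarrow> (nat \<Rightarrow> pauli list set) \<Rightarrow> nat \<Rightarrow> pauli list \<Rightarrow> bool" where
  "adds_to_group m G G' l p \<longleftrightarrow>
     l \<in> {1..m} \<and> p \<notin> G l \<and> G' l = insert p (G l) \<and> (\<forall>j\<in>{1..m}. j \<noteq> l \<longrightarrow> G' j = G j)"

lemma adds_to_group_Gamma_other:
  assumes "adds_to_group m G G' l p" "P i \<noteq> p"
  shows "Gamma m G' P i = Gamma m G P i"
  using assms unfolding adds_to_group_def Gamma_def by (metis insert_iff)

lemma adds_to_group_Gamma_added:
  assumes "adds_to_group m G G' l (P s)"
  shows "Gamma m G' P s = insert l (Gamma m G P s)" and "l \<notin> Gamma m G P s"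
  using assms unfolding adds_to_group_def Gamma_def by auto

lemma adds_to_group_alpha_other:
  assumes "adds_to_group m G G' l p" "P i \<noteq> p"
  shows "alpha m G' P M i = alpha m G P M i"
  unfolding alpha_def using adds_to_group_Gamma_other[where P=P, OF assms] by simp

lemma adds_to_group_alpha_added:
  assumes "adds_to_group m G G' l (P s)"
  shows "alpha m G' P M s = alpha m G P M s + real (M l)"
  using adds_to_group_Gamma_added[where P=P and s=s, OF assms]
  unfolding alpha_def by (simp add: Gamma_def)

lemma adds_to_group_alpha2_other:
  assumes "adds_to_group m G G' l p" "P i \<noteq> p" "P k \<noteq> p"
  shows "alpha2 m G' P M i k = alpha2 m G P M i k"
  unfolding alpha2_def using adds_to_group_Gamma_other assms by metis

lemma adds_to_group_alpha2_added:
  assumes add: "adds_to_group m G G' l (P s)" and "P i \<noteq> P s"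
  shows "alpha2 m G' P M i s = alpha2 m G P M i s + of_bool (P i \<in> G l) * real (M l)"
proof -
  note Gamma_i = adds_to_group_Gamma_other[where P=P, OF assms]
    and Gamma_s = adds_to_group_Gamma_added[where P=P and s=s, OF add]
  have l_i: "l \<in> Gamma m G P i \<longleftrightarrow> P i \<in> G l"
    using add unfolding adds_to_group_def Gamma_def by auto
  show ?thesis
  proof (cases "P i \<in> G l")
    case True
    then have "Gamma m G' P i \<inter> Gamma m G' P s = insert l (Gamma m G P i \<inter> Gamma m G P s)"
      using Gamma_i Gamma_s(1) l_i by auto
    then show ?thesis unfolding alpha2_def using True Gamma_s(2) by (simp add: Gamma_def)
  next
    case False
    then have "Gamma m G' P i \<inter> Gamma m G' P s = Gamma m G P i \<inter> Gamma m G P s"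
      using Gamma_i Gamma_s(1) l_i by auto
    then show ?thesis unfolding alpha2_def using False by simp
  qed
qed

definition est_var_diag :: "nat \<Rightarrow> (nat \<Rightarrow> real) \<Rightarrow> (nat \<Rightarrow> pauli list) \<Rightarrow> complex vec
    \<Rightarrow> nat \<Rightarrow> (nat \<Rightarrow> pauli list set) \<Rightarrow> (nat \<Rightarrow> nat) \<Rightarrow> real" where
  "est_var_diag N c P \<psi> m G M = (\<Sum>i\<in>{1..N}. (c i) ^ 2 * sigma2 \<psi> (P i) / alpha m G P M i)"

definition est_var_cross :: "nat \<Rightarrow> (nat \<Rightarrow> real) \<Rightarrow> (nat \<Rightarrow> pauli list) \<Rightarrow> complex vec
    \<Rightarrow> nat \<Rightarrow> (nat \<Rightarrow> pauli list set) \<Rightarrow> (nat \<Rightarrow> nat) \<Rightarrow> real" where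
  "est_var_cross N c P \<psi> m G M =
     (\<Sum>i\<in>{1..N}. \<Sum>k\<in>{i<..N}. c i * c k * sigma_cov \<psi> (P i) (P k) * alpha2 m G P M i k
          / (alpha m G P M i * alpha m G P M k))"

lemma est_var_split:
  "est_var N c P \<psi> m G M = est_var_diag N c P \<psi> m G M + 2 * est_var_cross N c P \<psi> m G M"
  unfolding est_var_def est_var_diag_def est_var_cross_def ..

definition covariance_gain :: "nat \<Rightarrow> (nat \<Rightarrow> real) \<Rightarrow> (nat \<Rightarrow> pauli list) \<Rightarrow> complex vec
    \<Rightarrow> nat \<Rightarrow> (nat \<Rightarrow> pauli list set) \<Rightarrow> (nat \<Rightarrow> nat) \<Rightarrow> nat \<Rightarrow> nat \<Rightarrow> real" where
  "covariance_gain N c P \<psi> m G M l s =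
     (let Q = {i \<in> {1..N}. P i \<in> G l} in
        (\<Sum>i\<in>Q. c i * c s * sigma_cov \<psi> (P i) (P s)
             * (alpha m G P M s - alpha2 m G P M i s) / alpha m G P M i)
      - (\<Sum>i\<in>({1..N} - Q) - {s}. c i * c s * sigma_cov \<psi> (P i) (P s)
             * alpha2 m G P M i s / alpha m G P M i))"

lemma est_var_diag_diff_adds_to_group:
  assumes inj: "inj_on P {1..N}" and add: "adds_to_group m G G' l (P s)" and s: "s \<in> {1..N}"
    and pos: "alpha m G P M s > 0"
  shows "est_var_diag N c P \<psi> m G' M - est_var_diag N c P \<psi> m G M
       = - (real (M l) / (alpha m G P M s * alpha m G' P M s)) * ((c s) ^ 2 * sigma2 \<psi> (P s))"
proof -
  let ?t = "\<lambda>X i. (c i) ^ 2 * sigma2 \<psi> (P i) / alpha m X P M i"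
  have "est_var_diag N c P \<psi> m G' M - est_var_diag N c P \<psi> m G M
      = (\<Sum>i\<in>{1..N}. if i = s then ?t G' s - ?t G s else 0)"
    unfolding est_var_diag_def sum_subtractf[symmetric]
  proof (rule sum.cong)
    fix i assume "i \<in> {1..N}"
    then have "i \<noteq> s \<Longrightarrow> P i \<noteq> P s" using inj s by (meson inj_onD)
    then show "?t G' i - ?t G i = (if i = s then ?t G' s - ?t G s else 0)"
      using adds_to_group_alpha_other[where P=P, OF add] by auto
  qed simp
  also have "\<dots> = ?t G' s - ?t G s" using s by simp
  also have "\<dots> = - (real (M l) / (alpha m G P M s * alpha m G' P M s)) * ((c s) ^ 2 * sigma2 \<psi> (P s))"
    unfolding adds_to_group_alpha_added[where P=P and s=s, OF add] using pos
    by (simp add: field_simps)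
  finally show ?thesis .
qed

lemma est_var_cross_diff_adds_to_group:
  assumes inj: "inj_on P {1..N}" and add: "adds_to_group m G G' l (P s)" and s: "s \<in> {1..N}"
  shows "est_var_cross N c P \<psi> m G' M - est_var_cross N c P \<psi> m G M
       = (\<Sum>i\<in>{1..N}-{s}. c i * c s * sigma_cov \<psi> (P i) (P s)
           * (alpha2 m G' P M i s / (alpha m G P M i * alpha m G' P M s)
              - alpha2 m G P M i s / (alpha m G P M i * alpha m G P M s)))"
proof -
  define t where "t X i k = c i * c k * sigma_cov \<psi> (P i) (P k) * alpha2 m X P M i k
          / (alpha m X P M i * alpha m X P M k)" for X i k
  have other: "P i \<noteq> P s" if "i \<in> {1..N}" "i \<noteq> s" for i
    using inj s that by (meson inj_onD)
  note alpha_other = adds_to_group_alpha_other[where P=P, OF add other]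
  show ?thesis
    unfolding est_var_cross_def sum_subtractf[symmetric] t_def[symmetric]
  proof (rule sum_upper_pairs_through[OF s])
    fix i k assume "i \<in> {1..N}" "k \<in> {1..N}" "i \<noteq> s" "k \<noteq> s"
    then show "t G' i k - t G i k = 0"
      unfolding t_def using alpha_other adds_to_group_alpha2_other[where P=P, OF add other other]
      by simp
  next
    fix i assume i: "i \<in> {1..N}" "i \<noteq> s"
    show "t G' i s - t G i s = c i * c s * sigma_cov \<psi> (P i) (P s)
           * (alpha2 m G' P M i s / (alpha m G P M i * alpha m G' P M s)
              - alpha2 m G P M i s / (alpha m G P M i * alpha m G P M s))"
      unfolding t_def using alpha_other[OF i] by (simp add: right_diff_distrib)
    moreover have "t X s i = t X i s" for X
      unfolding t_def by (simp add: sigma_cov_commute[of \<psi> "P s"] alpha2_commute[of m X P M s] ac_simps)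
    ultimately show "t G' s i - t G s i = c i * c s * sigma_cov \<psi> (P i) (P s)
           * (alpha2 m G' P M i s / (alpha m G P M i * alpha m G' P M s)
              - alpha2 m G P M i s / (alpha m G P M i * alpha m G P M s))"
      by simp
  qed
qed

lemma est_var_cross_diff_covariance_gain:
  assumes inj: "inj_on P {1..N}" and add: "adds_to_group m G G' l (P s)" and s: "s \<in> {1..N}"
    and pos: "\<forall>i\<in>{1..N}. alpha m G P M i > 0"
  shows "est_var_cross N c P \<psi> m G' M - est_var_cross N c P \<psi> m G M
       = real (M l) / (alpha m G P M s * alpha m G' P M s) * covariance_gain N c P \<psi> m G M l s"
proof -
  let ?A = "alpha m G P M s" and ?d = "real (M l)" and ?Q = "{i \<in> {1..N}. P i \<in> G l}"
  let ?f = "\<lambda>i. c i * c s * sigma_cov \<psi> (P i) (P s)"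
  define K where "K = ?d / (?A * alpha m G' P M s)"
  have A: "?A > 0" using pos s by blast
  have summand: "?f i * (alpha2 m G' P M i s / (alpha m G P M i * alpha m G' P M s)
                       - alpha2 m G P M i s / (alpha m G P M i * ?A))
      = K * (?f i * (of_bool (i \<in> ?Q) * ?A - alpha2 m G P M i s) / alpha m G P M i)"
    if i: "i \<in> {1..N}-{s}" for i
  proof -
    have Pi: "P i \<noteq> P s" using inj s i by (auto dest: inj_onD)
    have "alpha m G P M i > 0" using pos i by blast
    moreover have "of_bool (i \<in> ?Q) = (of_bool (P i \<in> G l) :: real)" using i by simp
    ultimately show ?thesis
      unfolding adds_to_group_alpha2_added[where P=P and s=s, OF add Pi]
        adds_to_group_alpha_added[where P=P and s=s, OF add] K_def
      using shifted_ratio_diff[of "alpha m G P M i" ?A ?d "alpha2 m G P M i s" "of_bool (P i \<in> G l)"] A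
      by simp
  qed
  have "?Q \<subseteq> {1..N}-{s}" and Q_compl: "{1..N} - {s} - ?Q = {1..N} - ?Q - {s}"
    using add unfolding adds_to_group_def by auto
  then have "(\<Sum>i\<in>{1..N}-{s}. ?f i * (of_bool (i \<in> ?Q) * ?A - alpha2 m G P M i s) / alpha m G P M i)
      = (\<Sum>i\<in>?Q. ?f i * (?A - alpha2 m G P M i s) / alpha m G P M i)
        - (\<Sum>i\<in>{1..N} - {s} - ?Q. ?f i * alpha2 m G P M i s / alpha m G P M i)"
    by (intro sum_of_bool_split) auto
  also have "\<dots> = covariance_gain N c P \<psi> m G M l s"
    unfolding covariance_gain_def Let_def Q_compl ..
  finally have gain: "(\<Sum>i\<in>{1..N}-{s}. ?f i * (of_bool (i \<in> ?Q) * ?A - alpha2 m G P M i s)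
      / alpha m G P M i) = covariance_gain N c P \<psi> m G M l s" .
  show ?thesis
    unfolding est_var_cross_diff_adds_to_group[OF inj add s] K_def[symmetric] gain[symmetric]
      sum_distrib_left
    by (rule sum.cong) (simp_all add: summand)
qed

lemma est_var_diff_adds_to_group:
  assumes "inj_on P {1..N}" "adds_to_group m G G' l (P s)" "s \<in> {1..N}"
    and "\<forall>i\<in>{1..N}. alpha m G P M i > 0"
  shows "est_var N c P \<psi> m G' M - est_var N c P \<psi> m G M
       = real (M l) / (alpha m G P M s * alpha m G' P M s)
         * (2 * covariance_gain N c P \<psi> m G M l s - (c s) ^ 2 * sigma2 \<psi> (P s))"
proof -
  have "alpha m G P M s > 0" using assms(3,4) by blast
  have "est_var N c P \<psi> m G' M - est_var N c P \<psi> m G M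
      = (est_var_diag N c P \<psi> m G' M - est_var_diag N c P \<psi> m G M)
        + 2 * (est_var_cross N c P \<psi> m G' M - est_var_cross N c P \<psi> m G M)"
    unfolding est_var_split by (simp add: algebra_simps)
  then show ?thesis
    unfolding est_var_diag_diff_adds_to_group[OF assms(1-3) \<open>alpha m G P M s > 0\<close>]
      est_var_cross_diff_covariance_gain[OF assms]
    by (simp add: algebra_simps)
qed

theorem lemma4:
  fixes n N m l s :: nat
    and c :: "nat \<Rightarrow> real" and P :: "nat \<Rightarrow> pauli list"
    and \<psi> :: "complex vec"
    and D G G' :: "nat \<Rightarrow> pauli list set"
    and M :: "nat \<Rightarrow> nat"
  assumes H: "pauli_hamiltonian n N c P"
    and state: "is_state n \<psi>"
    and R: "is_repacked N P m D G"
    and R': "is_repacked N P m D G'"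
    and refine: "\<forall>j\<in>{1..m}. G j \<subseteq> G' j"
    and l: "l \<in> {1..m}"
    and same: "\<forall>j\<in>{1..m}. j \<noteq> l \<longrightarrow> G' j = G j"
    and s: "s \<in> {1..N}"
    and added: "G' l - G l = {P s}"
    and shots: "\<forall>j\<in>{1..m}. M j > 0"
  defines "Q \<equiv> {i \<in> {1..N}. P i \<in> G l}"
  defines "rhs \<equiv>
      (\<Sum>i\<in>Q. c i * c s * sigma_cov \<psi> (P i) (P s)
           * (alpha m G P M s - alpha2 m G P M i s) / alpha m G P M i)
    - (\<Sum>i\<in>({1..N} - Q) - {s}. c i * c s * sigma_cov \<psi> (P i) (P s)
           * alpha2 m G P M i s / alpha m G P M i)"
  shows "(est_var N c P \<psi> m G' M \<le> est_var N c P \<psi> m G M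
            \<longleftrightarrow> (1/2) * (c s) ^ 2 * sigma2 \<psi> (P s) \<ge> rhs)
       \<and> (est_var N c P \<psi> m G' M < est_var N c P \<psi> m G M
            \<longleftrightarrow> (1/2) * (c s) ^ 2 * sigma2 \<psi> (P s) > rhs)"
proof -
  \<comment> \<open>The variance formula is taken as given.\<close>
  have inj: "inj_on P {1..N}" using H unfolding pauli_hamiltonian_def by blast
  have add: "adds_to_group m G G' l (P s)"
    using l same added refine unfolding adds_to_group_def by auto
  have pos: "\<forall>i\<in>{1..N}. alpha m G P M i > 0" using alpha_pos[OF R shots] by blast
  have "covariance_gain N c P \<psi> m G M l s = rhs"
    unfolding covariance_gain_def rhs_def Q_def Let_def ..
  then have diff: "est_var N c P \<psi> m G' M - est_var N c P \<psi> m G M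
      = real (M l) / (alpha m G P M s * alpha m G' P M s) * (2 * rhs - (c s) ^ 2 * sigma2 \<psi> (P s))"
    using est_var_diff_adds_to_group[OF inj add s pos] by simp
  have "real (M l) / (alpha m G P M s * alpha m G' P M s) > 0"
    using shots l alpha_pos[OF R shots s] alpha_pos[OF R' shots s] by simp
  from diff_eq_pos_mult_sign_iff[OF this diff] show ?thesis by linarith
qed

end
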